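(* Consider the P-SSD algorithm described in the context, executed over a constant (time-invariant) digraph $G$. Let $P$ be a directed path of length $l$ in $G$ from node $j$ to node $i$. Then for each iteration $k\in\mathbb{N}$ and all $q\ge k+l$, $$\mathcal{R}(C_q^i)\subseteq\mathcal{R}(C_k^j)\qquad\text{and}\qquad \mathcal{R}(D(X_j)C_q^i)=\mathcal{R}(D(Y_j)C_q^i).$$
   Context: Data setting: a map $T:\mathcal{M}\to\mathcal{M}$, $\mathcal{M}\subseteq\mathbb{R}^n$; a dictionary $D(x)=[d_1(x),\dots,d_{N_d}(x)]$ of real-valued functions on $\mathcal{M}$; data matrices $X,Y\in\mathbb{R}^{N\times n}$ whose $i$-th rows $x_i^T,y_i^T$ satisfy $y_i=T(x_i)$; $D(X)\in\mathbb{R}^{N\times N_d}$ is the matrix with rows $D(x_1),\dots,D(x_N)$ (similarly $D(Y)$). Assumption: $D(X)$ and $D(Y)$ have full column rank. There are $M$ agents; agent $i$ holds local dictionary snapshots $D(X_i),D(Y_i)$ (obtained from a subset of the snapshot pairs) such that the union over $i$ of the rows of $[D(X_i),D(Y_i)]$ equals the set of rows of $[D(X),D(Y)]$. There are signature matrices $D(X_s),D(Y_s)$ with full column rank such that the rows of $[D(X_s),D(Y_s)]$ are contained in the rows of $[D(X_i),D(Y_i)]$ for every $i$. SSD algorithm: given $A,B\in\mathbb{R}^{m\times q}$, set $A_1=A$, $B_1=B$, $C=I_q$, and iterate: let $[Z^A_j;Z^B_j]$ be a matrix whose columns form a basis of the null space of $[A_j,B_j]$ (with $Z^A_j$ having as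 many rows as $A_j$ has columns); if the null space is trivial return $0$; if the number of rows of $Z^A_j$ is at most its number of columns, return $C$; otherwise set $C\leftarrow CZ^A_j$, $A_{j+1}=A_jZ^A_j$, $B_{j+1}=B_jZ^A_j$. Its output is denoted $\mathrm{SSD}(A,B)$. P-SSD algorithm: at iteration $k\ge1$ the digraph $G_k$ is used; an edge $(j,i)\in E_k$ means $j$ is an in-neighbor of $i$, and $\mathcal{N}_{\mathrm{in}}^k(i)$ denotes the in-neighbors of $i$ in $G_k$. Each agent $i$ sets $C_0^i=I_{N_d}$, $\mathrm{flag}_0^i=0$, and for $k=1,2,\dots$: receives $C_{k-1}^j$ for $j\in\mathcal{N}_{\mathrm{in}}^k(i)$; sets $D_k^i=\mathrm{basis}\big(\bigcap_{j\in\{i\}\cup\mathcal{N}_{\mathrm{in}}^k(i)}\mathcal{R}(C_{k-1}^j)\big)$; sets $E_k^i=\mathrm{SSD}(D(X_i)D_k^i,D(Y_i)D_k^i)$; if the number of columns of $D_k^iE_k^i$ is strictly less than that of $C_{k-1}^i$, sets $C_k^i=D_k^iE_k^i$ and $\mathrm{flag}_k^i=0$; otherwise sets $C_k^i=C_{k-1}^i$ and $\mathrm{flag}_k^i=1$; then transmits $C_k^i$ to its out-neighbors. Here $\mathrm{basis}(\mathcal{A})$ returns a matrix whose columns form a basis of the subspace $\mathcal{A}$, and returns $0$ if $\mathcal{A}=\{0\}$; the matrix $0$ is regarded as having $0$ columns. $\mathcal{R}(\cdot)$ denotes range space. A directed path of length $l$ from $j$ to $i$ is a sequence of $l+1$ nodes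 starting at $j$ and ending at $i$ in which each consecutive ordered pair is an edge. *)

theory Defs
  imports "Jordan_Normal_Form.DL_Rank" "Jordan_Normal_Form.Matrix_Kernel"
begin

definition rng :: "real mat \<Rightarrow> real vec set" where
  "rng A = vec_space.col_space (dim_row A) A"

definition full_col_rank :: "real mat \<Rightarrow> bool" where
  "full_col_rank A \<longleftrightarrow> vec_space.rank (dim_row A) A = dim_col A"

text \<open>If S = {0} this forces B to have 0 columns, i.e. B is the matrix 0 of the paper.\<close>
definition is_basis_of :: "real mat \<Rightarrow> nat \<Rightarrow> real vec set \<Rightarrow> bool" where
  "is_basis_of B n S \<longleftrightarrow> dim_row B = n \<and> full_col_rank B \<and> rng B = S"

definition hcat :: "real mat \<Rightarrow> real mat \<Rightarrow> real mat" where
  "hcat A B = mat (dim_row A) (dim_col A + dim_col B)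
     (\<lambda>(r, c). if c < dim_col A then A $$ (r, c) else B $$ (r, c - dim_col A))"

definition top_rows :: "real mat \<Rightarrow> nat \<Rightarrow> real mat" where
  "top_rows Z p = mat p (dim_col Z) (\<lambda>(r, c). Z $$ (r, c))"

text \<open>ssd_rel A B C out: starting from the current state (A_j, B_j, C), some run of
  the SSD iteration returns out.\<close>
inductive ssd_rel :: "real mat \<Rightarrow> real mat \<Rightarrow> real mat \<Rightarrow> real mat \<Rightarrow> bool" where
  trivial_null:
    "mat_kernel (hcat A B) = {0\<^sub>v (dim_col A + dim_col B)}
     \<Longrightarrow> ssd_rel A B C (0\<^sub>m (dim_row C) 0)"
| stop:
    "is_basis_of Z (dim_col A + dim_col B) (mat_kernel (hcat A B))
     \<Longrightarrow> mat_kernel (hcat A B) \<noteq> {0\<^sub>v (dim_col A + dim_col B)}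
     \<Longrightarrow> dim_col A \<le> dim_col Z
     \<Longrightarrow> ssd_rel A B C C"
| step:
    "is_basis_of Z (dim_col A + dim_col B) (mat_kernel (hcat A B))
     \<Longrightarrow> mat_kernel (hcat A B) \<noteq> {0\<^sub>v (dim_col A + dim_col B)}
     \<Longrightarrow> \<not> dim_col A \<le> dim_col Z
     \<Longrightarrow> ssd_rel (A * top_rows Z (dim_col A)) (B * top_rows Z (dim_col A))
                 (C * top_rows Z (dim_col A)) out
     \<Longrightarrow> ssd_rel A B C out"

definition ssd :: "real mat \<Rightarrow> real mat \<Rightarrow> real mat \<Rightarrow> bool" where
  "ssd A B out \<longleftrightarrow> ssd_rel A B (1\<^sub>m (dim_col A)) out"

definition dict_mat :: "(nat \<Rightarrow> real vec \<Rightarrow> real) \<Rightarrow> nat \<Rightarrow> (nat \<Rightarrow> real vec) \<Rightarrow> nat \<Rightarrow> real mat" where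
  "dict_mat d Nd zs m = mat m Nd (\<lambda>(r, k). d k (zs r))"

definition local_mat :: "(nat \<Rightarrow> real vec \<Rightarrow> real) \<Rightarrow> nat \<Rightarrow> (nat \<Rightarrow> real vec) \<Rightarrow> nat list \<Rightarrow> real mat" where
  "local_mat d Nd zs idx = dict_mat d Nd (\<lambda>r. zs (idx ! r)) (length idx)"

definition row_pairs :: "real mat \<Rightarrow> real mat \<Rightarrow> (real vec \<times> real vec) set" where
  "row_pairs A B = {(row A r, row B r) | r. r < dim_row A}"

definition in_nbrs :: "(nat \<times> nat) set \<Rightarrow> nat \<Rightarrow> nat set" where
  "in_nbrs E i = {j. (j, i) \<in> E}"

definition dir_path :: "nat set \<Rightarrow> (nat \<times> nat) set \<Rightarrow> nat list \<Rightarrow> nat \<Rightarrow> nat \<Rightarrow> nat \<Rightarrow> bool" where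
  "dir_path V E ps l j i \<longleftrightarrow> length ps = l + 1 \<and> set ps \<subseteq> V \<and> hd ps = j \<and> last ps = i \<and>
     (\<forall>t < l. (ps ! t, ps ! (t + 1)) \<in> E)"

text \<open>C k i = C_k^i, Dm k i = D_k^i, Em k i = E_k^i.
  (The flags do not influence C and are omitted.)\<close>
definition pssd_exec ::
  "nat \<Rightarrow> (nat \<times> nat) set \<Rightarrow> nat \<Rightarrow> (nat \<Rightarrow> real mat) \<Rightarrow> (nat \<Rightarrow> real mat)
   \<Rightarrow> (nat \<Rightarrow> nat \<Rightarrow> real mat) \<Rightarrow> (nat \<Rightarrow> nat \<Rightarrow> real mat) \<Rightarrow> (nat \<Rightarrow> nat \<Rightarrow> real mat) \<Rightarrow> bool" where
  "pssd_exec Mag E Nd DXl DYl C Dm Em \<longleftrightarrow>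
     (\<forall>i < Mag. C 0 i = 1\<^sub>m Nd) \<and>
     (\<forall>k \<ge> 1. \<forall>i < Mag.
        is_basis_of (Dm k i) Nd (\<Inter>j \<in> insert i (in_nbrs E i). rng (C (k - 1) j)) \<and>
        ssd (DXl i * Dm k i) (DYl i * Dm k i) (Em k i) \<and>
        C k i = (if dim_col (Dm k i * Em k i) < dim_col (C (k - 1) i)
                 then Dm k i * Em k i else C (k - 1) i))"

end

theory Submission
  imports Defs
begin

(*
  Every matrix the algorithm produces has independent columns. When SSD stops, a basis
  [Z^A; Z^B] of the null space of [A, B] has a square invertible block Z^A with
  A Z^A = - B Z^B, so its output E satisfies R(X D E) = R(Y D E). Whether or not agent a adopts
  D_k^a E_k^a, a dimension count shows R(C_k^a) = R(D_k^a E_k^a), which lies in R(C_{k-1}^b)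
  for b = a and for every in-neighbour b; iterating along the path gives R(C_q^i) within
  R(C_k^j). For the range equality, the signature rows are rows of every agent, so
  X_a u = Y_a w implies X_s u = Y_s w with X_s and Y_s injective; this transports
  R(X_i C) = R(Y_i C) for C = C_q^i, together with R(X_j C_k^j) = R(Y_j C_k^j) on the larger
  subspace R(C_k^j), to R(X_j C) = R(Y_j C).
*)

section \<open>Matrices with independent columns\<close>

lemma mult_mat_vec_zero [simp]: "A \<in> carrier_mat r c \<Longrightarrow> A *\<^sub>v 0\<^sub>v c = 0\<^sub>v r"
  by (intro eq_vecI) (auto simp: scalar_prod_def)

lemma mult_mat_vec_carrier_dim_row: "A *\<^sub>v x \<in> carrier_vec (dim_row A)"
  by (rule carrier_vecI) simp

definition inj_mat :: "'a :: field mat \<Rightarrow> bool" where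
  "inj_mat A \<longleftrightarrow> (\<forall>x \<in> carrier_vec (dim_col A). A *\<^sub>v x = 0\<^sub>v (dim_row A) \<longrightarrow> x = 0\<^sub>v (dim_col A))"

lemma inj_matI:
  assumes "A \<in> carrier_mat r c"
    and "\<And>x. x \<in> carrier_vec c \<Longrightarrow> A *\<^sub>v x = 0\<^sub>v r \<Longrightarrow> x = 0\<^sub>v c"
  shows "inj_mat A"
  using assms unfolding inj_mat_def by auto

lemma inj_matD:
  "inj_mat A \<Longrightarrow> A \<in> carrier_mat r c \<Longrightarrow> x \<in> carrier_vec c \<Longrightarrow> A *\<^sub>v x = 0\<^sub>v r \<Longrightarrow> x = 0\<^sub>v c"
  unfolding inj_mat_def by auto

lemma inj_mat_cancel:
  assumes inj: "inj_mat A" and A: "A \<in> carrier_mat r c"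
    and u: "u \<in> carrier_vec c" and w: "w \<in> carrier_vec c" and eq: "A *\<^sub>v u = A *\<^sub>v w"
  shows "u = w"
proof -
  have "A *\<^sub>v (u - w) = 0\<^sub>v r"
    using eq A u w by (simp add: mult_minus_distrib_mat_vec)
  then have diff: "u - w = 0\<^sub>v c"
    using u w by (intro inj_matD[OF inj A]) auto
  show ?thesis
  proof (rule eq_vecI)
    fix i assume "i < dim_vec w"
    then have "(u - w) $ i = 0"
      using diff w by simp
    then show "u $ i = w $ i"
      using \<open>i < dim_vec w\<close> u w by simp
  qed (use u w in simp)
qed

lemma inj_mat_one: "inj_mat (1\<^sub>m n)"
  unfolding inj_mat_def by simp

lemma inj_mat_mult:
  assumes A: "A \<in> carrier_mat r n" and B: "B \<in> carrier_mat n c"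
    and "inj_mat A" "inj_mat B"
  shows "inj_mat (A * B)"
proof (rule inj_matI)
  show "A * B \<in> carrier_mat r c"
    using A B by simp
  fix x assume x: "x \<in> carrier_vec c" and "(A * B) *\<^sub>v x = 0\<^sub>v r"
  then have "A *\<^sub>v (B *\<^sub>v x) = 0\<^sub>v r"
    using A B by (simp add: assoc_mult_mat_vec)
  then have "B *\<^sub>v x = 0\<^sub>v n"
    using B x by (intro inj_matD[OF assms(3) A]) auto
  then show "x = 0\<^sub>v c"
    by (rule inj_matD[OF assms(4) B x])
qed

lemma inj_mat_mult_right:
  assumes A: "A \<in> carrier_mat r n" and B: "B \<in> carrier_mat n c" and inj: "inj_mat (A * B)"
  shows "inj_mat B"
proof (rule inj_matI[OF B])
  fix x assume x: "x \<in> carrier_vec c" and "B *\<^sub>v x = 0\<^sub>v n"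
  then have "(A * B) *\<^sub>v x = 0\<^sub>v r"
    using A B by (simp add: assoc_mult_mat_vec)
  then show "x = 0\<^sub>v c"
    using inj A B x by (intro inj_matD[of "A * B" r c]) auto
qed

lemma inj_mat_square_surj:
  assumes A: "A \<in> carrier_mat n n" and inj: "inj_mat A" and y: "y \<in> carrier_vec n"
  shows "\<exists>x \<in> carrier_vec n. A *\<^sub>v x = y"
proof -
  have "det A \<noteq> 0"
    using inj A det_0_iff_vec_prod_zero_field[OF A] inj_matD by blast
  then have "A \<in> Units (ring_mat TYPE('a) n ())"
    by (rule det_non_zero_imp_unit[OF A])
  then obtain B where B: "B \<in> carrier_mat n n" "A * B = 1\<^sub>m n"
    unfolding Units_def ring_mat_def by auto
  then have "A *\<^sub>v (B *\<^sub>v y) = y"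
    using A y by (metis assoc_mult_mat_vec one_mult_mat_vec)
  then show ?thesis
    using B y by (meson mult_mat_vec_carrier)
qed

text \<open>Padding A with zero rows gives a square injective, hence surjective, matrix; but
  its row r vanishes, so unit_vec c r is not in its range.\<close>
lemma inj_mat_dim_col_le:
  assumes A: "A \<in> carrier_mat r c" and inj: "inj_mat A"
  shows "c \<le> r"
proof (rule ccontr)
  assume "\<not> c \<le> r"
  then have rc: "r < c" by simp
  define P where "P = mat c c (\<lambda>(i, j). if i < r then A $$ (i, j) else 0)"
  have P: "P \<in> carrier_mat c c"
    unfolding P_def by simp
  have P_index: "(P *\<^sub>v x) $ i = (if i < r then (A *\<^sub>v x) $ i else 0)"
    if "i < c" "x \<in> carrier_vec c" for i x
    using that A by (auto simp: P_def scalar_prod_def)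
  have "inj_mat P"
  proof (rule inj_matI[OF P])
    fix x assume x: "x \<in> carrier_vec c" and "P *\<^sub>v x = 0\<^sub>v c"
    then have "(A *\<^sub>v x) $ i = 0" if "i < r" for i
      using P_index[of i x] x that rc by simp
    then have "A *\<^sub>v x = 0\<^sub>v r"
      using A by (intro eq_vecI) auto
    then show "x = 0\<^sub>v c"
      by (rule inj_matD[OF inj A x])
  qed
  then obtain x where x: "x \<in> carrier_vec c" "P *\<^sub>v x = unit_vec c r"
    using inj_mat_square_surj[OF P] unit_vec_carrier by blast
  then show False
    using P_index[of r x] rc by simp
qed

lemma full_col_rank_imp_inj_mat:
  assumes "full_col_rank A"
  shows "inj_mat A"
proof (rule ccontr)
  let ?r = "dim_row A" and ?c = "dim_col A"
  interpret vec_space "TYPE(real)" ?r .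
  have A: "A \<in> carrier_mat ?r ?c" by auto
  have rank: "rank A = ?c"
    using assms unfolding full_col_rank_def by simp
  assume "\<not> inj_mat A"
  then obtain v where v: "v \<in> carrier_vec ?c" "v \<noteq> 0\<^sub>v ?c" "A *\<^sub>v v = 0\<^sub>v ?r"
    unfolding inj_mat_def by auto
  show False
  proof (cases "distinct (cols A)")
    case True
    then show False
      using lin_depI[OF A v] full_rank_lin_indpt[OF A rank] by blast
  next
    case False
    obtain S where S: "maximal S (\<lambda>T. T \<subseteq> set (cols A) \<and> lin_indpt T)"
      using maximal_exists[of "\<lambda>T. T \<subseteq> set (cols A) \<and> lin_indpt T" "card (set (cols A))" "{}"]
      by (meson List.finite_set card_mono empty_iff empty_subsetI finite_lin_indpt2 rev_finite_subset)
    have "card S \<le> card (set (cols A))"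
      using S by (simp add: card_mono maximal_def)
    also have "\<dots> < ?c"
      using False card_distinct[of "cols A"] card_length[of "cols A"] by (metis cols_length le_neq_implies_less)
    finally show False
      using rank_card_indpt[OF A S] rank by simp
  qed
qed

section \<open>Range spaces\<close>

lemma rng_eq_image: "rng A = (\<lambda>x. A *\<^sub>v x) ` carrier_vec (dim_col A)"
  unfolding rng_def vec_space.col_space_eq[OF carrier_matI[OF refl refl]]
  using mult_mat_vec_carrier_dim_row by blast

lemma mult_mem_rng: "x \<in> carrier_vec (dim_col A) \<Longrightarrow> A *\<^sub>v x \<in> rng A"
  unfolding rng_eq_image by blast

lemma rng_subset_carrier: "rng A \<subseteq> carrier_vec (dim_row A)"
  unfolding rng_eq_image using mult_mat_vec_carrier_dim_row by blast

lemma rng_mult: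
  assumes M: "M \<in> carrier_mat r n" and V: "V \<in> carrier_mat n c"
  shows "rng (M * V) = (\<lambda>v. M *\<^sub>v v) ` rng V"
  unfolding rng_eq_image image_image using M V by (auto simp: assoc_mult_mat_vec)

lemma rng_mult_subset:
  assumes M: "M \<in> carrier_mat r n" and V: "V \<in> carrier_mat n c"
  shows "rng (M * V) \<subseteq> rng M"
  unfolding rng_mult[OF M V] using rng_subset_carrier[of V] M V by (auto intro: mult_mem_rng)

lemma rng_inj_square:
  assumes "A \<in> carrier_mat n n" and "inj_mat A"
  shows "rng A = carrier_vec n"
  using inj_mat_square_surj[OF assms] assms(1) unfolding rng_eq_image by auto

lemma rng_subset_imp_factor:
  assumes V: "V \<in> carrier_mat n p" and W: "W \<in> carrier_mat n q" and sub: "rng V \<subseteq> rng W"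
  obtains F where "F \<in> carrier_mat q p" and "V = W * F"
proof -
  have "\<exists>f \<in> carrier_vec q. W *\<^sub>v f = col V j" if "j < p" for j
  proof -
    have "col V j = V *\<^sub>v unit_vec p j"
      using V that by (intro eq_vecI) auto
    then have "col V j \<in> rng W"
      using sub mult_mem_rng[of "unit_vec p j" V] V by auto
    then show ?thesis
      using W unfolding rng_eq_image by auto
  qed
  then obtain f where f: "\<And>j. j < p \<Longrightarrow> f j \<in> carrier_vec q \<and> W *\<^sub>v f j = col V j"
    using bchoice[of "{..<p}" "\<lambda>j f. f \<in> carrier_vec q \<and> W *\<^sub>v f = col V j"] by auto
  define F where "F = mat_of_cols q (map f [0..<p])"
  have F: "F \<in> carrier_mat q p"
    by (rule carrier_matI) (simp_all add: F_def)
  have "V = W * F"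
  proof (rule mat_col_eqI)
    fix j assume "j < dim_col (W * F)"
    then have j: "j < p" using F by simp
    have "col (W * F) j = W *\<^sub>v col F j"
      by (rule col_mult2[OF W F j])
    also have "col F j = f j"
      using f[OF j] j unfolding F_def by (subst col_mat_of_cols) simp_all
    finally show "col V j = col (W * F) j"
      using f[OF j] by simp
  qed (use V W F in auto)
  with F show thesis by (rule that)
qed

lemma rng_eq_if_inj_subset:
  assumes V: "V \<in> carrier_mat n p" and W: "W \<in> carrier_mat n q"
    and inj: "inj_mat V" and le: "q \<le> p" and sub: "rng V \<subseteq> rng W"
  shows "rng V = rng W"
proof -
  obtain F where F: "F \<in> carrier_mat q p" and VWF: "V = W * F"
    using rng_subset_imp_factor[OF V W sub] .
  have inj_F: "inj_mat F"
    using inj_mat_mult_right[OF W F] inj VWF by simp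
  then have "p = q"
    using inj_mat_dim_col_le[OF F] le by simp
  then have "rng F = carrier_vec q"
    using rng_inj_square F inj_F by simp
  then have "rng (W * F) = rng W"
    using W unfolding rng_mult[OF W F] rng_eq_image[of W] by simp
  then show ?thesis
    using VWF by simp
qed

section \<open>The SSD algorithm\<close>

lemma is_basis_ofD:
  assumes "is_basis_of B n S"
  shows "B \<in> carrier_mat n (dim_col B)" and "inj_mat B" and "rng B = S"
  using assms full_col_rank_imp_inj_mat unfolding is_basis_of_def by auto

lemma hcat_carrier: "A \<in> carrier_mat r c \<Longrightarrow> B \<in> carrier_mat r c' \<Longrightarrow> hcat A B \<in> carrier_mat r (c + c')"
  unfolding hcat_def by simp

lemma hcat_mult_append_vec:
  assumes A: "A \<in> carrier_mat r c" and B: "B \<in> carrier_mat r c'"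
    and u: "u \<in> carrier_vec c" and w: "w \<in> carrier_vec c'"
  shows "hcat A B *\<^sub>v (u @\<^sub>v w) = A *\<^sub>v u + B *\<^sub>v w"
proof (rule eq_vecI)
  fix i assume "i < dim_vec (A *\<^sub>v u + B *\<^sub>v w)"
  then have i: "i < r" using B by simp
  have "(hcat A B *\<^sub>v (u @\<^sub>v w)) $ i = row (hcat A B) i \<bullet> (u @\<^sub>v w)"
    using A i by (simp add: hcat_def)
  also have "row (hcat A B) i = row A i @\<^sub>v row B i"
    using A B i by (intro eq_vecI) (auto simp: hcat_def)
  also have "(row A i @\<^sub>v row B i) \<bullet> (u @\<^sub>v w) = row A i \<bullet> u + row B i \<bullet> w"
    using A B u w by (intro scalar_prod_append) auto
  also have "\<dots> = (A *\<^sub>v u + B *\<^sub>v w) $ i"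
    using A B i by simp
  finally show "(hcat A B *\<^sub>v (u @\<^sub>v w)) $ i = (A *\<^sub>v u + B *\<^sub>v w) $ i" .
qed (use A B in \<open>simp add: hcat_def\<close>)

definition bottom_rows :: "'a mat \<Rightarrow> nat \<Rightarrow> nat \<Rightarrow> 'a mat" where
  "bottom_rows Z p q = mat q (dim_col Z) (\<lambda>(i, j). Z $$ (p + i, j))"

lemma top_rows_carrier [simp]:
  "top_rows Z p \<in> carrier_mat p (dim_col Z)" "dim_row (top_rows Z p) = p" "dim_col (top_rows Z p) = dim_col Z"
  unfolding top_rows_def by simp_all

lemma bottom_rows_carrier [simp]:
  "bottom_rows Z p q \<in> carrier_mat q (dim_col Z)" "dim_row (bottom_rows Z p q) = q"
  "dim_col (bottom_rows Z p q) = dim_col Z"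
  unfolding bottom_rows_def by simp_all

lemma top_rows_append_bottom_rows:
  assumes "Z \<in> carrier_mat (p + q) c"
  shows "top_rows Z p @\<^sub>r bottom_rows Z p q = Z"
  using assms by (intro eq_matI) (auto simp: append_rows_def top_rows_def bottom_rows_def)

lemma mult_vec_top_bottom_rows:
  assumes Z: "Z \<in> carrier_mat (p + q) n" and x: "x \<in> carrier_vec n"
  shows "Z *\<^sub>v x = (top_rows Z p *\<^sub>v x) @\<^sub>v (bottom_rows Z p q *\<^sub>v x)"
proof -
  have n: "dim_col Z = n"
    using Z by simp
  show ?thesis
    using mat_mult_append[OF top_rows_carrier(1)[of Z p, unfolded n]
        bottom_rows_carrier(1)[of Z p q, unfolded n] x]
    unfolding top_rows_append_bottom_rows[OF Z] .
qed

context
  fixes A B Z :: "real mat" and r c c' :: nat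
  assumes A: "A \<in> carrier_mat r c" and B: "B \<in> carrier_mat r c'"
    and Z: "is_basis_of Z (c + c') (mat_kernel (hcat A B))"
begin

lemma kernel_basis_blocks:
  assumes x: "x \<in> carrier_vec (dim_col Z)"
  shows "A *\<^sub>v (top_rows Z c *\<^sub>v x) + B *\<^sub>v (bottom_rows Z c c' *\<^sub>v x) = 0\<^sub>v r"
proof -
  have "Z *\<^sub>v x \<in> mat_kernel (hcat A B)"
    using mult_mem_rng[OF x] is_basis_ofD(3)[OF Z] by simp
  then have "hcat A B *\<^sub>v (Z *\<^sub>v x) = 0\<^sub>v r"
    by (rule mat_kernelD(2)[OF hcat_carrier[OF A B]])
  moreover have "Z *\<^sub>v x = (top_rows Z c *\<^sub>v x) @\<^sub>v (bottom_rows Z c c' *\<^sub>v x)"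
    by (rule mult_vec_top_bottom_rows[OF is_basis_ofD(1)[OF Z] x])
  moreover have "top_rows Z c *\<^sub>v x \<in> carrier_vec c" "bottom_rows Z c c' *\<^sub>v x \<in> carrier_vec c'"
    using mult_mat_vec_carrier_dim_row by (metis top_rows_carrier(2), metis bottom_rows_carrier(2))
  ultimately show ?thesis
    using hcat_mult_append_vec[OF A B] by simp
qed

lemma inj_mat_top_rows_kernel_basis:
  assumes inj_B: "inj_mat B"
  shows "inj_mat (top_rows Z c)"
proof (rule inj_matI[OF top_rows_carrier(1)])
  fix x assume x: "x \<in> carrier_vec (dim_col Z)" and top: "top_rows Z c *\<^sub>v x = 0\<^sub>v c"
  note Zc = is_basis_ofD(1)[OF Z]
  have "B *\<^sub>v (bottom_rows Z c c' *\<^sub>v x) \<in> carrier_vec r"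
    using B by (metis carrier_matD(1) mult_mat_vec_carrier_dim_row)
  then have "B *\<^sub>v (bottom_rows Z c c' *\<^sub>v x) = 0\<^sub>v r"
    using kernel_basis_blocks[OF x] A top by simp
  then have bottom: "bottom_rows Z c c' *\<^sub>v x = 0\<^sub>v c'"
    by (intro inj_matD[OF inj_B B] carrier_vecI) simp_all
  have "Z *\<^sub>v x = 0\<^sub>v (c + c')"
    unfolding mult_vec_top_bottom_rows[OF Zc x] top bottom by (intro eq_vecI) auto
  then show "x = 0\<^sub>v (dim_col Z)"
    by (rule inj_matD[OF is_basis_ofD(2)[OF Z] Zc x])
qed

end

text \<open>The stopping case of SSD: Z^A = top_rows Z c is square and invertible, and
  A Z^A = - B Z^B.\<close>
lemma rng_eq_if_kernel_basis_wide:
  fixes A B Z :: "real mat"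
  assumes A: "A \<in> carrier_mat r c" and B: "B \<in> carrier_mat r c"
    and inj_A: "inj_mat A" and inj_B: "inj_mat B"
    and Z: "is_basis_of Z (c + c) (mat_kernel (hcat A B))" and wide: "c \<le> dim_col Z"
  shows "rng A = rng B"
proof -
  let ?T = "top_rows Z c" and ?S = "bottom_rows Z c c"
  have inj_T: "inj_mat ?T"
    by (rule inj_mat_top_rows_kernel_basis[OF A B Z inj_B])
  then have square: "dim_col Z = c"
    using inj_mat_dim_col_le[OF top_rows_carrier(1)] wide by (simp add: le_antisym)
  have rng_T: "rng ?T = carrier_vec c"
    using rng_inj_square[OF top_rows_carrier(1)[of Z c, unfolded square] inj_T] .
  have "rng A \<subseteq> rng B"
  proof
    fix y assume "y \<in> rng A"
    then obtain v where "v \<in> rng ?T" and y: "y = A *\<^sub>v v"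
      using A rng_T unfolding rng_eq_image[of A] by auto
    then obtain x where x: "x \<in> carrier_vec (dim_col Z)" and v: "v = ?T *\<^sub>v x"
      unfolding rng_eq_image by auto
    have "A *\<^sub>v (?T *\<^sub>v x) = B *\<^sub>v (- (?S *\<^sub>v x))"
    proof (rule eq_vecI)
      fix i assume "i < dim_vec (B *\<^sub>v (- (?S *\<^sub>v x)))"
      then have i: "i < r"
        using B by simp
      have "(A *\<^sub>v (?T *\<^sub>v x) + B *\<^sub>v (?S *\<^sub>v x)) $ i = 0"
        using kernel_basis_blocks[OF A B Z x] i by simp
      then show "(A *\<^sub>v (?T *\<^sub>v x)) $ i = (B *\<^sub>v (- (?S *\<^sub>v x))) $ i"
        using A B i by (simp add: eq_neg_iff_add_eq_0)
    qed (use A B in simp)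
    moreover have "- (?S *\<^sub>v x) \<in> carrier_vec (dim_col B)"
      using B by (intro carrier_vecI) simp
    ultimately show "y \<in> rng B"
      using y v mult_mem_rng by metis
  qed
  then show ?thesis
    using rng_eq_if_inj_subset[OF A B inj_A] by blast
qed

lemma ssd_rel_output:
  fixes A0 B0 :: "real mat"
  assumes "ssd_rel A B C out"
    and A0: "A0 \<in> carrier_mat r m" and B0: "B0 \<in> carrier_mat r m"
    and inj_A0: "inj_mat A0" and inj_B0: "inj_mat B0"
  shows "C \<in> carrier_mat m c \<Longrightarrow> inj_mat C \<Longrightarrow> A = A0 * C \<Longrightarrow> B = B0 * C \<Longrightarrow>
    dim_row out = m \<and> inj_mat out \<and> rng (A0 * out) = rng (B0 * out)"
  using assms(1)
proof (induction arbitrary: c)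
  case (trivial_null A B C)
  have "inj_mat (0\<^sub>m m 0 :: real mat)"
    by (rule inj_matI[of _ m 0]) (auto intro: eq_vecI)
  moreover have "A0 * 0\<^sub>m m 0 = B0 * 0\<^sub>m m 0"
    using A0 B0 by simp
  ultimately show ?case
    using trivial_null.prems(1) by simp
next
  case (stop Z A B C)
  have A: "A \<in> carrier_mat r c" and B: "B \<in> carrier_mat r c"
    using stop.prems A0 B0 by auto
  have "inj_mat A" "inj_mat B"
    using stop.prems A0 B0 inj_A0 inj_B0 by (auto intro: inj_mat_mult)
  moreover have "is_basis_of Z (c + c) (mat_kernel (hcat A B))" "c \<le> dim_col Z"
    using stop.hyps A B by auto
  ultimately have "rng A = rng B"
    using rng_eq_if_kernel_basis_wide[OF A B] by blast
  then show ?case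
    using stop.prems by auto
next
  case (step Z A B C out)
  have A: "A \<in> carrier_mat r c" and B: "B \<in> carrier_mat r c"
    using step.prems A0 B0 by auto
  let ?T = "top_rows Z c"
  have "is_basis_of Z (c + c) (mat_kernel (hcat A B))"
    using step.hyps A B by auto
  moreover have "inj_mat B"
    using step.prems B0 inj_B0 by (auto intro: inj_mat_mult)
  ultimately have "inj_mat ?T"
    using inj_mat_top_rows_kernel_basis[OF A B] by blast
  then have "inj_mat (C * ?T)"
    using step.prems by (intro inj_mat_mult) auto
  moreover have "A * ?T = A0 * (C * ?T)" "B * ?T = B0 * (C * ?T)"
    using step.prems A0 B0 by (auto simp: assoc_mult_mat[of _ r m _ c _ "dim_col Z"])
  moreover have "C * ?T \<in> carrier_mat m (dim_col Z)"
    using step.prems by simp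
  ultimately show ?case
    using step.IH A by simp
qed

lemma ssd_output:
  assumes "ssd A B out" and "A \<in> carrier_mat r m" and "B \<in> carrier_mat r m"
    and "inj_mat A" and "inj_mat B"
  shows "dim_row out = m \<and> inj_mat out \<and> rng (A * out) = rng (B * out)"
  using ssd_rel_output[of A B "1\<^sub>m m" out A r m B m] assms unfolding ssd_def by (simp add: inj_mat_one)

section \<open>Runs of P-SSD\<close>

lemma dir_path_ends:
  assumes "dir_path V E ps l j i"
  shows "j \<in> V" and "i \<in> V"
proof -
  have "ps \<noteq> []" "set ps \<subseteq> V" "hd ps = j" "last ps = i"
    using assms unfolding dir_path_def by auto
  then show "j \<in> V" "i \<in> V"
    using hd_in_set last_in_set by blast+
qed

locale pssd_run =
  fixes Mag :: nat and E :: "(nat \<times> nat) set" and Nd :: nat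
    and X Y :: "nat \<Rightarrow> real mat" and C Dm Em :: "nat \<Rightarrow> nat \<Rightarrow> real mat"
    and rows :: "nat \<Rightarrow> nat"
  assumes exec: "pssd_exec Mag E Nd X Y C Dm Em"
    and X_carrier: "a < Mag \<Longrightarrow> X a \<in> carrier_mat (rows a) Nd"
    and Y_carrier: "a < Mag \<Longrightarrow> Y a \<in> carrier_mat (rows a) Nd"
    and inj_X: "a < Mag \<Longrightarrow> inj_mat (X a)"
    and inj_Y: "a < Mag \<Longrightarrow> inj_mat (Y a)"
begin

lemma C_step:
  assumes "1 \<le> k" and "a < Mag"
  shows "is_basis_of (Dm k a) Nd (\<Inter>b \<in> insert a (in_nbrs E a). rng (C (k - 1) b))"
    and "ssd (X a * Dm k a) (Y a * Dm k a) (Em k a)"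
    and "C k a = (if dim_col (Dm k a * Em k a) < dim_col (C (k - 1) a)
                  then Dm k a * Em k a else C (k - 1) a)"
  using exec assms unfolding pssd_exec_def by blast+

lemma C_carrier:
  assumes a: "a < Mag"
  shows "C k a \<in> carrier_mat Nd (dim_col (C k a))"
proof (rule carrier_matI)
  show "dim_row (C k a) = Nd"
  proof (induction k)
    case 0
    show ?case
      using exec a unfolding pssd_exec_def by simp
  next
    case (Suc k)
    then show ?case
      using C_step[OF _ a, of "Suc k"] unfolding is_basis_of_def by simp
  qed
qed simp

lemma candidate_props:
  assumes k: "1 \<le> k" and a: "a < Mag"
  shows "dim_row (Dm k a * Em k a) = Nd" and "inj_mat (Dm k a * Em k a)"
    and "rng (X a * (Dm k a * Em k a)) = rng (Y a * (Dm k a * Em k a))"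
    and "rng (Dm k a * Em k a) \<subseteq> (\<Inter>b \<in> insert a (in_nbrs E a). rng (C (k - 1) b))"
proof -
  let ?D = "Dm k a" and ?E = "Em k a"
  note basis = C_step(1)[OF k a]
  have D: "?D \<in> carrier_mat Nd (dim_col ?D)" and inj_D: "inj_mat ?D"
    using is_basis_ofD(1,2)[OF basis] .
  have XD: "X a * ?D \<in> carrier_mat (rows a) (dim_col ?D)"
    and YD: "Y a * ?D \<in> carrier_mat (rows a) (dim_col ?D)"
    using mult_carrier_mat[OF X_carrier[OF a] D] mult_carrier_mat[OF Y_carrier[OF a] D] .
  have "inj_mat (X a * ?D)" "inj_mat (Y a * ?D)"
    using inj_mat_mult[OF X_carrier[OF a] D inj_X[OF a] inj_D]
      inj_mat_mult[OF Y_carrier[OF a] D inj_Y[OF a] inj_D] .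
  then have E: "?E \<in> carrier_mat (dim_col ?D) (dim_col ?E)" and inj_E: "inj_mat ?E"
    and rng_E: "rng (X a * ?D * ?E) = rng (Y a * ?D * ?E)"
    using ssd_output[OF C_step(2)[OF k a] XD YD] by auto
  show "dim_row (?D * ?E) = Nd"
    using D by simp
  show "inj_mat (?D * ?E)"
    by (rule inj_mat_mult[OF D E inj_D inj_E])
  show "rng (X a * (?D * ?E)) = rng (Y a * (?D * ?E))"
    using rng_E unfolding assoc_mult_mat[OF X_carrier[OF a] D E] assoc_mult_mat[OF Y_carrier[OF a] D E] .
  show "rng (?D * ?E) \<subseteq> (\<Inter>b \<in> insert a (in_nbrs E a). rng (C (k - 1) b))"
    using rng_mult_subset[OF D E] is_basis_ofD(3)[OF basis] by simp
qed

text \<open>If agent a keeps its old C, then R(D E) lies in R(C) and D E has at least as many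
  independent columns as C, so the two ranges coincide.\<close>
lemma rng_C_eq_candidate:
  assumes k: "1 \<le> k" and a: "a < Mag"
  shows "rng (C k a) = rng (Dm k a * Em k a)"
proof (cases "dim_col (Dm k a * Em k a) < dim_col (C (k - 1) a)")
  case True
  then show ?thesis
    using C_step(3)[OF k a] by simp
next
  case False
  let ?V = "Dm k a * Em k a" and ?C = "C (k - 1) a"
  have V: "?V \<in> carrier_mat Nd (dim_col ?V)"
    using candidate_props(1)[OF k a] by auto
  note C = C_carrier[OF a, of "k - 1"]
  have "rng ?V \<subseteq> rng ?C"
    using candidate_props(4)[OF k a] INT_lower[of a "insert a (in_nbrs E a)"] by (rule order.trans) simp
  then have "rng ?V = rng ?C"
    using False by (intro rng_eq_if_inj_subset[OF V C candidate_props(2)[OF k a]]) simp_all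
  then show ?thesis
    using C_step(3)[OF k a] False by simp
qed

lemma local_images_eq:
  assumes k: "1 \<le> k" and a: "a < Mag"
  shows "(\<lambda>u. X a *\<^sub>v u) ` rng (C k a) = (\<lambda>u. Y a *\<^sub>v u) ` rng (C k a)"
proof -
  let ?V = "Dm k a * Em k a"
  have V: "?V \<in> carrier_mat Nd (dim_col ?V)"
    using candidate_props(1)[OF k a] by auto
  have "(\<lambda>u. X a *\<^sub>v u) ` rng (C k a) = rng (X a * ?V)"
    unfolding rng_mult[OF X_carrier[OF a] V] rng_C_eq_candidate[OF k a] ..
  also have "\<dots> = rng (Y a * ?V)"
    by (rule candidate_props(3)[OF k a])
  also have "\<dots> = (\<lambda>u. Y a *\<^sub>v u) ` rng (C k a)"
    unfolding rng_mult[OF Y_carrier[OF a] V] rng_C_eq_candidate[OF k a] ..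
  finally show ?thesis .
qed

lemma rng_C_subset_prev:
  assumes "1 \<le> k" and "a < Mag" and "b \<in> insert a (in_nbrs E a)"
  shows "rng (C k a) \<subseteq> rng (C (k - 1) b)"
  unfolding rng_C_eq_candidate[OF assms(1,2)]
  using candidate_props(4)[OF assms(1,2)] INT_lower[OF assms(3)] by (rule order.trans)

lemma rng_C_antimono:
  assumes "k \<le> q" and a: "a < Mag"
  shows "rng (C q a) \<subseteq> rng (C k a)"
  using assms(1)
proof (induction q rule: dec_induct)
  case (step q)
  then show ?case
    using rng_C_subset_prev[of "Suc q" a a] a by auto
qed simp

lemma rng_C_dir_path:
  assumes path: "dir_path {..<Mag} E ps l j i" and q: "k + l \<le> q"
  shows "rng (C q i) \<subseteq> rng (C k j)"
proof -
  have len: "length ps = l + 1" and nodes: "set ps \<subseteq> {..<Mag}"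
    and first: "hd ps = j" and final: "last ps = i"
    and edges: "\<And>t. t < l \<Longrightarrow> (ps ! t, ps ! (t + 1)) \<in> E"
    using path unfolding dir_path_def by auto
  have ne: "ps \<noteq> []"
    using len by auto
  have node: "ps ! t < Mag" if "t \<le> l" for t
  proof -
    have "ps ! t \<in> set ps"
      using that len by (intro nth_mem) simp
    then show ?thesis
      using nodes by auto
  qed
  have "rng (C q (ps ! t)) \<subseteq> rng (C k j)" if "t \<le> l" "k + t \<le> q" for t q
    using that
  proof (induction t arbitrary: q)
    case 0
    have "ps ! 0 = j"
      using first hd_conv_nth[OF ne] by simp
    then show ?case
      using rng_C_antimono[of k q j] node[of 0] 0 by simp
  next
    case (Suc t)
    have "ps ! t \<in> insert (ps ! Suc t) (in_nbrs E (ps ! Suc t))"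
      using edges[of t] Suc.prems unfolding in_nbrs_def by simp
    then have "rng (C q (ps ! Suc t)) \<subseteq> rng (C (q - 1) (ps ! t))"
      using rng_C_subset_prev node[of "Suc t"] Suc.prems by simp
    also have "\<dots> \<subseteq> rng (C k j)"
      using Suc by simp
    finally show ?case .
  qed
  moreover have "ps ! l = i"
    using final last_conv_nth[OF ne] len by simp
  ultimately show ?thesis
    using q by (metis order_refl)
qed

end

section \<open>Signature matrices\<close>

lemma local_mat_carrier: "local_mat d Nd zs idx \<in> carrier_mat (length idx) Nd"
  unfolding local_mat_def dict_mat_def by simp

lemma mult_vec_eq_if_row_pairs_subset:
  assumes sub: "row_pairs S T \<subseteq> row_pairs X Y"
    and S: "S \<in> carrier_mat rs n" and T: "T \<in> carrier_mat rs n'"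
    and X: "X \<in> carrier_mat rx n" and Y: "Y \<in> carrier_mat rx n'"
    and eq: "X *\<^sub>v u = Y *\<^sub>v w"
  shows "S *\<^sub>v u = T *\<^sub>v w"
proof (rule eq_vecI)
  fix r assume "r < dim_vec (T *\<^sub>v w)"
  then have "(row S r, row T r) \<in> row_pairs X Y"
    using sub S T unfolding row_pairs_def by auto
  then obtain r' where r': "r' < rx" "row S r = row X r'" "row T r = row Y r'"
    using X unfolding row_pairs_def by auto
  have "(S *\<^sub>v u) $ r = (X *\<^sub>v u) $ r'"
    using \<open>r < dim_vec (T *\<^sub>v w)\<close> S T X r' by simp
  also have "\<dots> = (Y *\<^sub>v w) $ r'"
    by (simp add: eq)
  also have "\<dots> = (T *\<^sub>v w) $ r"
    using \<open>r < dim_vec (T *\<^sub>v w)\<close> T Y r' by simp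
  finally show "(S *\<^sub>v u) $ r = (T *\<^sub>v w) $ r" .
qed (use S T in simp)

lemma inj_mat_if_row_pairs_subset:
  assumes sub: "row_pairs S T \<subseteq> row_pairs X Y"
    and S: "S \<in> carrier_mat rs n" and T: "T \<in> carrier_mat rs n"
    and X: "X \<in> carrier_mat rx n" and Y: "Y \<in> carrier_mat rx n"
  shows "inj_mat S \<Longrightarrow> inj_mat X" and "inj_mat T \<Longrightarrow> inj_mat Y"
proof -
  assume inj_S: "inj_mat S"
  show "inj_mat X"
  proof (rule inj_matI[OF X])
    fix u assume u: "u \<in> carrier_vec n" and "X *\<^sub>v u = 0\<^sub>v rx"
    then have "S *\<^sub>v u = T *\<^sub>v 0\<^sub>v n"
      using Y by (intro mult_vec_eq_if_row_pairs_subset[OF sub S T X Y]) simp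
    then show "u = 0\<^sub>v n"
      using T u by (intro inj_matD[OF inj_S S]) simp_all
  qed
next
  assume inj_T: "inj_mat T"
  show "inj_mat Y"
  proof (rule inj_matI[OF Y])
    fix w assume w: "w \<in> carrier_vec n" and "Y *\<^sub>v w = 0\<^sub>v rx"
    then have "S *\<^sub>v 0\<^sub>v n = T *\<^sub>v w"
      using X by (intro mult_vec_eq_if_row_pairs_subset[OF sub S T X Y]) simp
    then show "w = 0\<^sub>v n"
      using S w by (intro inj_matD[OF inj_T T]) simp_all
  qed
qed

text \<open>Given v in U, agent i yields Yi v = Xi v' with v' in U and agent j yields
  Yj v = Xj u with u in U'; both equations hold on the signature rows, so Xs v' = Xs u and
  injectivity of Xs gives v' = u.\<close>
lemma image_subset_transfer:
  fixes Xs Ys Xi Yi Xj Yj :: "'a :: field mat"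
  assumes Xs: "Xs \<in> carrier_mat rs n" and inj: "inj_mat Xs"
    and U: "U \<subseteq> U'" and U': "U' \<subseteq> carrier_vec n"
    and sig_i: "\<And>u w. Xi *\<^sub>v u = Yi *\<^sub>v w \<Longrightarrow> Xs *\<^sub>v u = Ys *\<^sub>v w"
    and sig_j: "\<And>u w. Xj *\<^sub>v u = Yj *\<^sub>v w \<Longrightarrow> Xs *\<^sub>v u = Ys *\<^sub>v w"
    and im_i: "(\<lambda>u. Yi *\<^sub>v u) ` U \<subseteq> (\<lambda>u. Xi *\<^sub>v u) ` U"
    and im_j: "(\<lambda>u. Yj *\<^sub>v u) ` U' \<subseteq> (\<lambda>u. Xj *\<^sub>v u) ` U'"
  shows "(\<lambda>u. Yj *\<^sub>v u) ` U \<subseteq> (\<lambda>u. Xj *\<^sub>v u) ` U"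
proof clarify
  fix v assume v: "v \<in> U"
  obtain v' where v': "v' \<in> U" "Yi *\<^sub>v v = Xi *\<^sub>v v'"
    using im_i v by blast
  obtain u where u: "u \<in> U'" "Yj *\<^sub>v v = Xj *\<^sub>v u"
    using im_j v U by blast
  have "Xs *\<^sub>v v' = Xs *\<^sub>v u"
    using sig_i[OF v'(2)[symmetric]] sig_j[OF u(2)[symmetric]] by simp
  moreover have "v' \<in> carrier_vec n" "u \<in> carrier_vec n"
    using v'(1) u(1) U U' by blast+
  ultimately have "v' = u"
    using inj_mat_cancel[OF inj Xs] by blast
  then show "Yj *\<^sub>v v \<in> (\<lambda>u. Xj *\<^sub>v u) ` U"
    using u(2) v'(1) by simp
qed

lemma image_eq_transfer:
  fixes Xs Ys Xi Yi Xj Yj :: "'a :: field mat"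
  assumes Xs: "Xs \<in> carrier_mat rs n" and Ys: "Ys \<in> carrier_mat rs n"
    and inj_Xs: "inj_mat Xs" and inj_Ys: "inj_mat Ys"
    and U: "U \<subseteq> U'" and U': "U' \<subseteq> carrier_vec n"
    and sig_i: "\<And>u w. Xi *\<^sub>v u = Yi *\<^sub>v w \<Longrightarrow> Xs *\<^sub>v u = Ys *\<^sub>v w"
    and sig_j: "\<And>u w. Xj *\<^sub>v u = Yj *\<^sub>v w \<Longrightarrow> Xs *\<^sub>v u = Ys *\<^sub>v w"
    and im_i: "(\<lambda>u. Xi *\<^sub>v u) ` U = (\<lambda>u. Yi *\<^sub>v u) ` U"
    and im_j: "(\<lambda>u. Xj *\<^sub>v u) ` U' = (\<lambda>u. Yj *\<^sub>v u) ` U'"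
  shows "(\<lambda>u. Xj *\<^sub>v u) ` U = (\<lambda>u. Yj *\<^sub>v u) ` U"
proof (rule subset_antisym)
  have sig_i': "Ys *\<^sub>v u = Xs *\<^sub>v w" if "Yi *\<^sub>v u = Xi *\<^sub>v w" for u w
    using sig_i[OF that[symmetric]] by (rule sym)
  have sig_j': "Ys *\<^sub>v u = Xs *\<^sub>v w" if "Yj *\<^sub>v u = Xj *\<^sub>v w" for u w
    using sig_j[OF that[symmetric]] by (rule sym)
  show "(\<lambda>u. Xj *\<^sub>v u) ` U \<subseteq> (\<lambda>u. Yj *\<^sub>v u) ` U"
    by (rule image_subset_transfer[OF Ys inj_Ys U U' sig_i' sig_j' equalityD1[OF im_i] equalityD1[OF im_j]])
  show "(\<lambda>u. Yj *\<^sub>v u) ` U \<subseteq> (\<lambda>u. Xj *\<^sub>v u) ` U"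
    by (rule image_subset_transfer[OF Xs inj_Xs U U' sig_i sig_j equalityD2[OF im_i] equalityD2[OF im_j]])
qed

theorem proposition5p1:
  fixes n Nd N Mag :: nat
    and Msp :: "real vec set" and T :: "real vec \<Rightarrow> real vec"
    and d :: "nat \<Rightarrow> real vec \<Rightarrow> real"
    and xs ys :: "nat \<Rightarrow> real vec"
    and idx :: "nat \<Rightarrow> nat list" and idxs :: "nat list"
    and E :: "(nat \<times> nat) set"
    and C Dm Em :: "nat \<Rightarrow> nat \<Rightarrow> real mat"
    and ps :: "nat list" and l j i :: nat
  assumes "Msp \<subseteq> carrier_vec n"
    and "\<forall>x \<in> Msp. T x \<in> Msp"
    and "\<forall>p < N. xs p \<in> Msp \<and> ys p = T (xs p)"
    and "full_col_rank (dict_mat d Nd xs N)"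
    and "full_col_rank (dict_mat d Nd ys N)"
    and "\<forall>a < Mag. set (idx a) \<subseteq> {..<N}"
    and "(\<Union>a < Mag. row_pairs (local_mat d Nd xs (idx a)) (local_mat d Nd ys (idx a)))
         = row_pairs (dict_mat d Nd xs N) (dict_mat d Nd ys N)"
    and "set idxs \<subseteq> {..<N}"
    and "full_col_rank (local_mat d Nd xs idxs)"
    and "full_col_rank (local_mat d Nd ys idxs)"
    and "\<forall>a < Mag. row_pairs (local_mat d Nd xs idxs) (local_mat d Nd ys idxs)
                  \<subseteq> row_pairs (local_mat d Nd xs (idx a)) (local_mat d Nd ys (idx a))"
    and "E \<subseteq> {..<Mag} \<times> {..<Mag}"
    and "pssd_exec Mag E Nd (\<lambda>a. local_mat d Nd xs (idx a)) (\<lambda>a. local_mat d Nd ys (idx a)) C Dm Em"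
    and "dir_path {..<Mag} E ps l j i"
  shows "\<forall>k q. 1 \<le> k \<longrightarrow> k + l \<le> q \<longrightarrow>
           rng (C q i) \<subseteq> rng (C k j) \<and>
           rng (local_mat d Nd xs (idx j) * C q i) = rng (local_mat d Nd ys (idx j) * C q i)"
proof -
  let ?X = "\<lambda>a. local_mat d Nd xs (idx a)" and ?Y = "\<lambda>a. local_mat d Nd ys (idx a)"
  let ?Xs = "local_mat d Nd xs idxs" and ?Ys = "local_mat d Nd ys idxs"
  note carrier = local_mat_carrier[of d Nd]
  have inj_Xs: "inj_mat ?Xs" and inj_Ys: "inj_mat ?Ys"
    using assms(9,10) by (auto intro: full_col_rank_imp_inj_mat)
  have sig: "?Xs *\<^sub>v u = ?Ys *\<^sub>v w" if "a < Mag" "?X a *\<^sub>v u = ?Y a *\<^sub>v w" for a u w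
    using assms(11) that carrier by (blast intro: mult_vec_eq_if_row_pairs_subset)
  interpret pssd_run Mag E Nd ?X ?Y C Dm Em "\<lambda>a. length (idx a)"
    using assms(11,13) carrier inj_Xs inj_Ys by unfold_locales (blast intro: inj_mat_if_row_pairs_subset)+
  have j: "j < Mag" and i: "i < Mag"
    using dir_path_ends[OF assms(14)] by auto
  show ?thesis
  proof (intro allI impI conjI)
    fix k q assume k: "1 \<le> k" and q: "k + l \<le> q"
    show sub: "rng (C q i) \<subseteq> rng (C k j)"
      by (rule rng_C_dir_path[OF assms(14) q])
    have U': "rng (C k j) \<subseteq> carrier_vec Nd"
      using rng_subset_carrier[of "C k j"] unfolding carrier_matD(1)[OF C_carrier[OF j]] .
    have "1 \<le> q"
      using k q by simp
    note im_i = local_images_eq[OF this i] and im_j = local_images_eq[OF k j]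
    show "rng (?X j * C q i) = rng (?Y j * C q i)"
      unfolding rng_mult[OF carrier C_carrier[OF i]]
      by (rule image_eq_transfer[OF carrier carrier inj_Xs inj_Ys sub U' sig[OF i] sig[OF j] im_i im_j])
  qed
qed

end
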